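(* Let $n\ge1$ and let $\sigma\in(0,1)$, $c,d,\epsilon,l,s,y,y_->0$, $\tau\ge0$ be constants with $s\le l$. For $\alpha>0$ let $\eta=\max(|1-n\alpha l|,|1-n\alpha s|)$ and $$G_\alpha=\begin{bmatrix}\sigma&0&\alpha\\ \alpha cly_-&\eta&0\\ cd\epsilon ly_-(\tau+\alpha lyy_-)&\alpha d\epsilon l^2yy_-&\sigma+\alpha cd\epsilon ly_-\end{bmatrix}.$$ Let $\Delta=nscd\epsilon ly_-(1-\sigma+\tau)$ and $$\overline{\alpha}=\min\left\{\frac{\sqrt{\Delta^2+4ns(1-\sigma)^2cd\epsilon l^2yy_-^2(l+ns)}-\Delta}{2cd\epsilon l^2yy_-^2(l+ns)},\ \frac{1}{nl}\right\}.$$ Then the spectral radius satisfies $\rho(G_\alpha)<1$ for every $\alpha\in(0,\overline{\alpha})$.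
   Context: In the paper these constants arise as follows (not needed for the statement): $\sigma$ is the value of a matrix norm of $A-A_\infty$ for the column-stochastic weight matrix $A$ and its limit $A_\infty$; $c,d$ are norm-equivalence constants; $\tau=\|A-I\|_2$, $\epsilon=\|I-A_\infty\|_2$; $y,y_-$ are uniform bounds on $\|Y_k\|_2$, $\|Y_k^{-1}\|_2$; $l,s$ are the Lipschitz and strong-convexity constants of the local objectives. $\rho(\cdot)$ denotes spectral radius. *)

theory Defs
  imports Complex_Main "Jordan_Normal_Form.Spectral_Radius"
begin

definition G_mat :: "nat \<Rightarrow> real \<Rightarrow> real \<Rightarrow> real \<Rightarrow> real \<Rightarrow> real \<Rightarrow> real \<Rightarrow> real \<Rightarrow> real \<Rightarrow> real \<Rightarrow> real \<Rightarrow> real mat" where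
  "G_mat n \<sigma> c d \<epsilon> l s y ym \<tau> \<alpha> =
     (let \<eta> = max \<bar>1 - real n * \<alpha> * l\<bar> \<bar>1 - real n * \<alpha> * s\<bar> in
      mat_of_rows_list 3
        [[\<sigma>, 0, \<alpha>],
         [\<alpha> * c * l * ym, \<eta>, 0],
         [c * d * \<epsilon> * l * ym * (\<tau> + \<alpha> * l * y * ym), \<alpha> * d * \<epsilon> * l^2 * y * ym, \<sigma> + \<alpha> * c * d * \<epsilon> * l * ym]])"

definition alpha_bar :: "nat \<Rightarrow> real \<Rightarrow> real \<Rightarrow> real \<Rightarrow> real \<Rightarrow> real \<Rightarrow> real \<Rightarrow> real \<Rightarrow> real \<Rightarrow> real \<Rightarrow> real" where
  "alpha_bar n \<sigma> c d \<epsilon> l s y ym \<tau> =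
     (let \<Delta> = real n * s * c * d * \<epsilon> * l * ym * (1 - \<sigma> + \<tau>);
          K = c * d * \<epsilon> * l^2 * y * ym^2 * (l + real n * s) in
      min ((sqrt (\<Delta>^2 + 4 * real n * s * (1 - \<sigma>)^2 * K) - \<Delta>) / (2 * K))
          (1 / (real n * l)))"

end

theory Submission imports Defs begin

text \<open>A nonnegative matrix \<open>G\<close> with a positive vector \<open>v\<close> satisfying \<open>G v < v\<close> componentwise has
  spectral radius below 1: at the index where \<open>|x\<^sub>i| / v\<^sub>i\<close> is maximal, an eigenvector \<open>x\<close>
  forces \<open>|\<mu>| < 1\<close>. For \<open>\<alpha> < 1 / (n l)\<close> we have \<open>\<eta> = 1 - n \<alpha> s\<close>, and the vector
  \<open>(1, (\<alpha> c l y\<^sub>- + t) / (n \<alpha> s), (1 - \<sigma>) (1 - t) / \<alpha>)\<close> satisfies the first two rows for every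
  \<open>t \<in> (0, 1)\<close>. The third row is affine in \<open>t\<close> and at \<open>t = 0\<close> it is, up to a positive factor,
  the quadratic inequality \<open>K \<alpha>\<^sup>2 + \<Delta> \<alpha> < n s (1 - \<sigma>)\<^sup>2\<close>, whose positive root is the first
  term of \<open>\<alpha>\<close>-bar; so it also holds for small \<open>t > 0\<close>.\<close>

lemma mult_mat_vec_index_sum:
  assumes "A \<in> carrier_mat n n" "x \<in> carrier_vec n" "i < n"
  shows "(A *\<^sub>v x) $ i = (\<Sum>j<n. A $$ (i, j) * x $ j)"
  using assms by (auto simp: scalar_prod_def atLeast0LessThan intro!: sum.cong)

lemma spectral_radius_lt_1_if_subinvariant_vector:
  fixes B :: "real mat" and v :: "real vec"
  assumes B: "B \<in> carrier_mat n n" and v: "v \<in> carrier_vec n" and "0 < n"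
    and B_nonneg: "\<And>i j. i < n \<Longrightarrow> j < n \<Longrightarrow> 0 \<le> B $$ (i, j)"
    and v_pos: "\<And>i. i < n \<Longrightarrow> 0 < v $ i"
    and Bv_less: "\<And>i. i < n \<Longrightarrow> (B *\<^sub>v v) $ i < v $ i"
  shows "spectral_radius (map_mat complex_of_real B) < 1"
proof -
  let ?A = "map_mat complex_of_real B"
  have A: "?A \<in> carrier_mat n n" using B by simp
  obtain \<mu> where "\<mu> \<in> spectrum ?A" and sr: "spectral_radius ?A = norm \<mu>"
    using spectral_radius_mem_max(1)[OF A \<open>0 < n\<close>] by auto
  then obtain x where "eigenvector ?A x \<mu>" unfolding spectrum_def eigenvalue_def by auto
  then have x: "x \<in> carrier_vec n" and "x \<noteq> 0\<^sub>v n" and Ax: "?A *\<^sub>v x = \<mu> \<cdot>\<^sub>v x"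
    using B unfolding eigenvector_def by auto
  then obtain k where k: "k < n" "x $ k \<noteq> 0" by (metis eq_vecI index_zero_vec carrier_vecD)
  define r where "r j = norm (x $ j) / v $ j" for j
  define t where "t = Max (r ` {..<n})"
  have "t \<in> r ` {..<n}" unfolding t_def using \<open>0 < n\<close> by (intro Max_in) auto
  then obtain i where i: "i < n" and ri: "r i = t" by auto
  have r_le: "r j \<le> t" if "j < n" for j unfolding t_def using that by auto
  have "0 < r k" unfolding r_def using k v_pos by auto
  with r_le[OF k(1)] have t_pos: "0 < t" by simp
  have x_le: "norm (x $ j) \<le> t * v $ j" if "j < n" for j
    using r_le[OF that] v_pos[OF that] unfolding r_def by (simp add: divide_le_eq)
  have x_i: "norm (x $ i) = t * v $ i" using ri v_pos[OF i] unfolding r_def by (simp add: divide_eq_eq)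
  have "norm \<mu> * norm (x $ i) = norm ((?A *\<^sub>v x) $ i)"
    using Ax i x by (simp add: norm_mult)
  also have "\<dots> = norm (\<Sum>j<n. complex_of_real (B $$ (i, j)) * x $ j)"
    using mult_mat_vec_index_sum[OF A x i] B i by simp
  also have "\<dots> \<le> (\<Sum>j<n. B $$ (i, j) * norm (x $ j))"
    by (rule order_trans[OF norm_sum]) (simp add: norm_mult B_nonneg i)
  also have "\<dots> \<le> (\<Sum>j<n. B $$ (i, j) * (t * v $ j))"
    by (rule sum_mono) (simp add: mult_left_mono x_le B_nonneg i)
  also have "\<dots> = t * (B *\<^sub>v v) $ i"
    by (simp add: mult_mat_vec_index_sum[OF B v i] sum_distrib_left algebra_simps)
  also have "\<dots> < t * v $ i" using Bv_less[OF i] t_pos by simp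
  finally have "norm \<mu> * (t * v $ i) < 1 * (t * v $ i)" using x_i by simp
  then show ?thesis using sr t_pos v_pos[OF i] by (simp add: mult_less_cancel_right_pos)
qed

lemma quadratic_less_if_less_pos_root:
  fixes K D P x :: real
  assumes "0 < K" "0 \<le> D" "0 \<le> x" and x_less: "x < (sqrt (D^2 + 4 * P * K) - D) / (2 * K)"
  shows "K * x^2 + D * x < P"
proof -
  have lt: "2 * K * x + D < sqrt (D^2 + 4 * P * K)" using x_less \<open>0 < K\<close> by (simp add: field_simps)
  moreover have "0 \<le> 2 * K * x + D" using assms by simp
  ultimately have "(2 * K * x + D)^2 < (sqrt (D^2 + 4 * P * K))^2" by (intro power_strict_mono) auto
  also have "\<dots> = D^2 + 4 * P * K"
  proof (rule real_sqrt_pow2)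
    have "0 < sqrt (D^2 + 4 * P * K)" using lt \<open>0 \<le> 2 * K * x + D\<close> by linarith
    then show "0 \<le> D^2 + 4 * P * K" by simp
  qed
  finally have "4 * K * (K * x^2 + D * x) < 4 * K * P" by (simp add: power2_eq_square algebra_simps)
  then show ?thesis using \<open>0 < K\<close> by simp
qed

lemma exists_pos_affine_neg:
  fixes a b :: real assumes "a < 0" shows "\<exists>t. 0 < t \<and> t < 1 \<and> a + t * b < 0"
proof (intro exI conjI)
  let ?t = "- a / (2 * (\<bar>b\<bar> + 1 - a))"
  show t_pos: "0 < ?t" using assms by (intro divide_pos_pos) auto
  show "?t < 1" using assms by (simp add: field_simps)
  have "?t * b \<le> ?t * \<bar>b\<bar>" using t_pos by (intro mult_left_mono) auto
  also have "\<dots> < - a"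
  proof -
    have "a * \<bar>b\<bar> \<le> 0" using assms by (simp add: mult_nonpos_nonneg)
    moreover have "0 < a * a" using assms by (simp add: mult_neg_neg)
    ultimately show ?thesis using assms by (simp add: field_simps)
  qed
  finally show "a + ?t * b < 0" by simp
qed

lemma spectral_radius_lt_1_3x3:
  fixes \<sigma> \<alpha> p w q r u :: real
  assumes "0 < \<sigma>" "\<sigma> < 1" "0 < \<alpha>" "0 \<le> p" "0 < w" "w \<le> 1" "0 \<le> q" "0 \<le> r" "0 \<le> u"
    and cond: "\<alpha> * q * w + \<alpha> * r * p + w * u * (1 - \<sigma>) < w * (1 - \<sigma>)^2"
  shows "spectral_radius (map_mat complex_of_real
           (mat_of_rows_list 3 [[\<sigma>, 0, \<alpha>], [p, 1 - w, 0], [q, r, \<sigma> + u]])) < 1"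
proof -
  txt \<open>Test vector \<open>(1, (p + t) / w, (1 - \<sigma>) (1 - t) / \<alpha>)\<close>; \<open>a + t b\<close> is the defect of its
    third row.\<close>
  define a where "a = q + r * p / w - (1 - \<sigma> - u) * (1 - \<sigma>) / \<alpha>"
  define b where "b = r / w + (1 - \<sigma> - u) * (1 - \<sigma>) / \<alpha>"
  have "a * (\<alpha> * w) = \<alpha> * q * w + \<alpha> * r * p + w * u * (1 - \<sigma>) - w * (1 - \<sigma>)^2"
    unfolding a_def using assms by (simp add: field_simps power2_eq_square)
  with cond have "a * (\<alpha> * w) < 0" by simp
  then have "a < 0" using assms by (simp add: mult_less_0_iff)
  then obtain t where t: "0 < t" "t < 1" "a + t * b < 0" using exists_pos_affine_neg by blast
  have "\<sigma> + \<alpha> * ((1 - \<sigma>) * (1 - t) / \<alpha>) = 1 - (1 - \<sigma>) * t"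
    using assms by (simp add: field_simps)
  moreover have "0 < (1 - \<sigma>) * t" using assms t by simp
  ultimately have row1: "\<sigma> + \<alpha> * ((1 - \<sigma>) * (1 - t) / \<alpha>) < 1" by simp
  have row2: "p + (1 - w) * ((p + t) / w) < (p + t) / w"
    using assms t by (simp add: field_simps)
  have "q + r * ((p + t) / w) + (\<sigma> + u) * ((1 - \<sigma>) * (1 - t) / \<alpha>) - (1 - \<sigma>) * (1 - t) / \<alpha>
      = a + t * b"
    unfolding a_def b_def using assms by (simp add: field_simps)
  with t have row3:
    "q + r * ((p + t) / w) + (\<sigma> + u) * ((1 - \<sigma>) * (1 - t) / \<alpha>) < (1 - \<sigma>) * (1 - t) / \<alpha>"
    by simp
  have "0 < (p + t) / w" "0 < (1 - \<sigma>) * (1 - t) / \<alpha>" using assms t by auto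
  with row1 row2 row3 show ?thesis
    using assms
    by (intro spectral_radius_lt_1_if_subinvariant_vector[where n = 3
          and v = "vec_of_list [1, (p + t) / w, (1 - \<sigma>) * (1 - t) / \<alpha>]"])
      (auto simp: less_Suc_eq numeral_3_eq_3 mat_of_rows_list_def scalar_prod_def lessThan_Suc
        atLeast0LessThan)
qed

theorem lemma4:
  fixes n :: nat and \<sigma> c d \<epsilon> l s y ym \<tau> \<alpha> :: real
  assumes "n \<ge> 1"
    and "0 < \<sigma>" "\<sigma> < 1"
    and "c > 0" "d > 0" "\<epsilon> > 0" "l > 0" "s > 0" "y > 0" "ym > 0"
    and "\<tau> \<ge> 0" "s \<le> l"
    and "0 < \<alpha>" "\<alpha> < alpha_bar n \<sigma> c d \<epsilon> l s y ym \<tau>"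
  shows "spectral_radius (map_mat complex_of_real (G_mat n \<sigma> c d \<epsilon> l s y ym \<tau> \<alpha>)) < 1"
proof -
  define \<Delta> where "\<Delta> = real n * s * c * d * \<epsilon> * l * ym * (1 - \<sigma> + \<tau>)"
  define K where "K = c * d * \<epsilon> * l^2 * y * ym^2 * (l + real n * s)"
  have "0 < K" unfolding K_def using assms by (intro mult_pos_pos add_pos_nonneg) auto
  have "0 \<le> \<Delta>" unfolding \<Delta>_def using assms by (intro mult_nonneg_nonneg) auto
  have "\<alpha> < 1 / (real n * l)"
    and "\<alpha> < (sqrt (\<Delta>^2 + 4 * (real n * s * (1 - \<sigma>)^2) * K) - \<Delta>) / (2 * K)"
    using assms(14) unfolding alpha_bar_def Let_def \<Delta>_def K_def by (simp_all add: mult.assoc)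
  then have step_lt: "real n * \<alpha> * l < 1"
    and quad: "K * \<alpha>^2 + \<Delta> * \<alpha> < real n * s * (1 - \<sigma>)^2"
    using assms \<open>0 < K\<close> \<open>0 \<le> \<Delta>\<close> quadratic_less_if_less_pos_root by (auto simp: field_simps)
  have "real n * \<alpha> * s \<le> real n * \<alpha> * l" "0 < real n * \<alpha> * s" using assms by simp_all
  with step_lt have w_le: "real n * \<alpha> * s \<le> 1"
    and "max \<bar>1 - real n * \<alpha> * l\<bar> \<bar>1 - real n * \<alpha> * s\<bar> = 1 - real n * \<alpha> * s" by auto
  then have G: "G_mat n \<sigma> c d \<epsilon> l s y ym \<tau> \<alpha> = mat_of_rows_list 3
      [[\<sigma>, 0, \<alpha>], [\<alpha> * c * l * ym, 1 - real n * \<alpha> * s, 0],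
       [c * d * \<epsilon> * l * ym * (\<tau> + \<alpha> * l * y * ym), \<alpha> * d * \<epsilon> * l^2 * y * ym,
        \<sigma> + \<alpha> * c * d * \<epsilon> * l * ym]]"
    unfolding G_mat_def Let_def by simp
  have "\<alpha> * (c * d * \<epsilon> * l * ym * (\<tau> + \<alpha> * l * y * ym)) * (real n * \<alpha> * s)
      + \<alpha> * (\<alpha> * d * \<epsilon> * l^2 * y * ym) * (\<alpha> * c * l * ym)
      + real n * \<alpha> * s * (\<alpha> * c * d * \<epsilon> * l * ym) * (1 - \<sigma>)
      = \<alpha> * (K * \<alpha>^2 + \<Delta> * \<alpha>)"
    unfolding K_def \<Delta>_def by (simp add: power2_eq_square algebra_simps)
  also have "\<dots> < real n * \<alpha> * s * (1 - \<sigma>)^2" using quad assms by simp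
  finally show ?thesis
    unfolding G using assms w_le by (intro spectral_radius_lt_1_3x3) simp_all
qed

end
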